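(* Let $c>0$, $0<\lambda\le T_M$, and let $f\in C^2(\mathbb R)$ solve $$f''(y)-cf'(y)-f^4(y)=-\int_{-\infty}^\infty E(y-\eta)f^4(\eta)\,d\eta\ (y\in\mathbb R),\qquad 0<\lambda\le f\le T_M.$$ Then $f$ does not attain its supremum nor its infimum over $\mathbb R$ at any point of $\mathbb R$, unless $f$ is constant.
   Context: $E(x)=\frac12\int_{|x|}^\infty\frac{e^{-t}}{t}dt$, which satisfies $\int_{\mathbb R}E=1$. *)

theory Defs
  imports "HOL-Analysis.Analysis"
begin

text \<open>The kernel E(x) = 1/2 * integral from |x| to infinity of exp(-t)/t dt
  (Henstock-Kurzweil integral; the value at x = 0, where the integral diverges,
  is irrelevant for the convolution).\<close>
definition E :: "real \<Rightarrow> real" where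
  "E x = (1/2) * integral {\<bar>x\<bar>..} (\<lambda>t. exp (- t) / t)"

end

theory Submission
  imports Defs
begin

text \<open>At a maximum point \<open>y\<^sub>0\<close> of \<open>f\<close> we have \<open>f' y\<^sub>0 = 0\<close> and \<open>f'' y\<^sub>0 \<le> 0\<close>. Since
  \<open>E \<ge> 0\<close> has total mass 1, the equation turns into
  \<open>f'' y\<^sub>0 = \<integral> E (y\<^sub>0 - \<eta>) (f y\<^sub>0 ^ 4 - f \<eta> ^ 4) d\<eta>\<close>. The integrand is non-negative, and
  it is positive near any point where \<open>f < f y\<^sub>0\<close> because \<open>E\<close> is positive away from 0, so
  \<open>f'' y\<^sub>0 > 0\<close> unless \<open>f\<close> is constant. The argument only uses that \<open>u = f ^ 4\<close> is an
  increasing function of \<open>f\<close>; since the equation is linear in the pair \<open>(f, u)\<close>, minima of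
  \<open>f\<close> are maxima of \<open>-f\<close> with \<open>u = - f ^ 4\<close>.\<close>

lemma exp_neg_div_integrable_on_atLeast:
  fixes a :: real
  assumes "0 < a"
  shows "(\<lambda>t. exp (- t) / t) integrable_on {a..}"
proof (rule measurable_bounded_by_integrable_imp_integrable)
  have "continuous_on {a..} (\<lambda>t. exp (- t) / t)"
    using assms by (intro continuous_intros) auto
  then show "(\<lambda>t. exp (- t) / t) \<in> borel_measurable (lebesgue_on {a..})"
    by (rule continuous_imp_measurable_on_sets_lebesgue) simp
  have "((\<lambda>t. exp (- 1 * t)) has_integral exp (- 1 * a) / 1) {a..}"
    by (rule has_integral_exp_minus_to_infinity) simp
  then show "(\<lambda>t. exp (- t) / a) integrable_on {a..}"
    by (intro integrable_on_divide) auto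
  show "norm (exp (- t) / t) \<le> exp (- t) / a" if "t \<in> {a..}" for t
    using that assms by (auto intro!: divide_left_mono)
qed simp

lemma E_nonneg: "0 \<le> E x"
proof (cases "(\<lambda>t. exp (- t) / t) integrable_on {\<bar>x\<bar>..}")
  case True
  then show ?thesis
    unfolding E_def by (auto intro!: integral_nonneg)
qed (simp add: E_def not_integrable_integral)

definition E_density :: "real \<Rightarrow> real \<Rightarrow> ennreal" where
  "E_density x t = ennreal (if \<bar>x\<bar> \<le> t then exp (- t) / (2 * t) else 0)"

lemma E_eq_nn_integral:
  assumes "x \<noteq> 0"
  shows "ennreal (E x) = (\<integral>\<^sup>+t. E_density x t \<partial>lborel)"
proof -
  have "((\<lambda>t. exp (- t) / t / 2) has_integral integral {\<bar>x\<bar>..} (\<lambda>t. exp (- t) / t) / 2)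
          {\<bar>x\<bar>..}"
    using assms
    by (intro has_integral_divide integrable_integral exp_neg_div_integrable_on_atLeast) simp
  then have "((\<lambda>t. exp (- t) / t / 2) has_integral E x) {\<bar>x\<bar>..}"
    by (simp add: E_def)
  from nn_integral_has_integral_lebesgue'[OF _ this]
  have "ennreal (E x)
          = (\<integral>\<^sup>+t. ennreal (exp (- t) / t / 2) * indicator {\<bar>x\<bar>..} t \<partial>lborel)"
    by simp
  also have "\<dots> = (\<integral>\<^sup>+t. E_density x t \<partial>lborel)"
    by (intro nn_integral_cong) (simp add: E_density_def indicator_def mult.commute)
  finally show ?thesis .
qed

lemma nn_integral_E_density:
  assumes "t \<noteq> 0"
  shows "(\<integral>\<^sup>+x. E_density x t \<partial>lborel) = ennreal (exp (- t)) * indicator {0..} t"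
proof (cases "0 < t")
  case True
  have "(\<integral>\<^sup>+x. E_density x t \<partial>lborel)
          = (\<integral>\<^sup>+x. ennreal (exp (- t) / (2 * t)) * indicator {-t..t} x \<partial>lborel)"
    unfolding E_density_def by (auto intro!: nn_integral_cong simp: indicator_def abs_le_iff)
  also have "\<dots> = ennreal (exp (- t) / (2 * t)) * emeasure lborel {-t..t}"
    by (rule nn_integral_cmult_indicator) simp
  also have "emeasure lborel {-t..t} = ennreal (2 * t)"
    using True by simp
  also have "ennreal (exp (- t) / (2 * t)) * ennreal (2 * t) = ennreal (exp (- t))"
    using True by (subst ennreal_mult[symmetric]) auto
  finally show ?thesis
    using True by simp
next
  case False
  then have "E_density x t = 0" for x
    by (auto simp: E_density_def)
  then show ?thesis
    using False assms by simp
qed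

lemma nn_integral_E: "(\<integral>\<^sup>+x. ennreal (E x) \<partial>lborel) = 1"
proof -
  have "(\<integral>\<^sup>+x. ennreal (E x) \<partial>lborel) = (\<integral>\<^sup>+x. (\<integral>\<^sup>+t. E_density x t \<partial>lborel) \<partial>lborel)"
    using AE_lborel_singleton[of 0]
    by (intro nn_integral_cong_AE) (auto elim!: eventually_mono simp: E_eq_nn_integral)
  also have "\<dots> = (\<integral>\<^sup>+t. (\<integral>\<^sup>+x. E_density x t \<partial>lborel) \<partial>lborel)"
    by (rule lborel_pair.Fubini') (simp add: E_density_def case_prod_unfold)
  also have "\<dots> = (\<integral>\<^sup>+t. ennreal (exp (- t)) * indicator {0..} t \<partial>lborel)"
    using AE_lborel_singleton[of 0]
    by (intro nn_integral_cong_AE) (auto elim!: eventually_mono simp: nn_integral_E_density)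
  also have "\<dots> = 1"
  proof -
    have "((\<lambda>t. exp (- 1 * t)) has_integral exp (- 1 * 0) / 1) {0::real..}"
      by (rule has_integral_exp_minus_to_infinity) simp
    then have "((\<lambda>t. exp (- t)) has_integral 1) {0::real..}"
      by simp
    from nn_integral_has_integral_lebesgue'[OF _ this] show ?thesis
      by simp
  qed
  finally show ?thesis .
qed

lemma borel_measurable_E [measurable]: "E \<in> borel_measurable borel"
proof -
  have "E = (\<lambda>x. if x = 0 then E 0 else enn2real (\<integral>\<^sup>+t. E_density x t \<partial>lborel))"
    by (auto simp: E_nonneg simp flip: E_eq_nn_integral)
  also have "\<dots> \<in> borel_measurable borel"
    unfolding E_density_def by measurable
  finally show ?thesis .
qed

lemma has_integral_E_reflect: "((\<lambda>\<eta>. E (y - \<eta>)) has_integral 1) UNIV"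
proof (rule nn_integral_has_integral)
  have "(\<integral>\<^sup>+x. ennreal (E x) \<partial>lborel)
          = ennreal \<bar>-1\<bar> * (\<integral>\<^sup>+x. ennreal (E (y + (-1) * x)) \<partial>lborel)"
    by (rule nn_integral_real_affine) auto
  then show "(\<integral>\<^sup>+\<eta>. ennreal (E (y - \<eta>)) \<partial>lborel) = ennreal 1"
    by (simp add: nn_integral_E)
qed (auto simp: E_nonneg)

lemma E_lower_bound:
  assumes "x \<noteq> 0" and "\<bar>x\<bar> \<le> R"
  shows "exp (- (R + 1)) / (R + 1) / 2 \<le> E x"
proof -
  have R: "0 < R"
    using assms by linarith
  have "exp (- (R + 1)) / (R + 1) = integral {R..R+1} (\<lambda>_. exp (- (R + 1)) / (R + 1))"
    by simp
  also have "\<dots> \<le> integral {R..R+1} (\<lambda>t. exp (- t) / t)"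
  proof (rule integral_le)
    show "(\<lambda>t. exp (- t) / t) integrable_on {R..R+1}"
      using R by (intro integrable_continuous_interval continuous_intros) auto
    show "exp (- (R + 1)) / (R + 1) \<le> exp (- t) / t" if "t \<in> {R..R+1}" for t
      using that R by (intro frac_le) auto
  qed (intro integrable_continuous_interval continuous_intros)
  also have "\<dots> \<le> integral {\<bar>x\<bar>..} (\<lambda>t. exp (- t) / t)"
    using assms R
    by (intro integral_subset_le integrable_continuous_interval exp_neg_div_integrable_on_atLeast
        continuous_intros) auto
  finally show ?thesis
    using R by (simp add: E_def field_simps)
qed

lemma E_conv_integrable:
  fixes g :: "real \<Rightarrow> real"
  assumes "continuous_on UNIV g" and "bounded (range g)"
  shows "(\<lambda>\<eta>. E (y - \<eta>) * g \<eta>) integrable_on UNIV"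
proof -
  have "(\<lambda>\<eta>. E (y - \<eta>)) absolutely_integrable_on UNIV"
    using has_integral_E_reflect E_nonneg by (intro nonnegative_absolutely_integrable_1) auto
  then have "(\<lambda>\<eta>. g \<eta> * E (y - \<eta>)) absolutely_integrable_on UNIV"
    using assms continuous_imp_measurable_on_sets_lebesgue[of UNIV g]
    by (intro absolutely_integrable_bounded_measurable_product_real) auto
  then show ?thesis
    by (simp add: mult.commute set_lebesgue_integral_eq_integral(1))
qed

lemma E_conv_const_diff:
  assumes "(\<lambda>\<eta>. E (y - \<eta>) * h \<eta>) integrable_on UNIV"
  shows "integral UNIV (\<lambda>\<eta>. E (y - \<eta>) * (b - h \<eta>))
           = b - integral UNIV (\<lambda>\<eta>. E (y - \<eta>) * h \<eta>)"
proof -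
  have E_int: "(\<lambda>\<eta>. E (y - \<eta>)) integrable_on UNIV"
    and E_one: "integral UNIV (\<lambda>\<eta>. E (y - \<eta>)) = 1"
    using has_integral_E_reflect by (auto intro: integral_unique)
  have "integral UNIV (\<lambda>\<eta>. E (y - \<eta>) * (b - h \<eta>))
          = integral UNIV (\<lambda>\<eta>. E (y - \<eta>) * b) - integral UNIV (\<lambda>\<eta>. E (y - \<eta>) * h \<eta>)"
    unfolding right_diff_distrib by (intro integral_diff integrable_on_mult_left E_int assms)
  then show ?thesis
    by (simp add: E_one)
qed

lemma E_conv_pos:
  fixes g :: "real \<Rightarrow> real"
  assumes cont: "continuous_on UNIV g" and bdd: "bounded (range g)"
    and nonneg: "\<And>\<eta>. 0 \<le> g \<eta>" and pos: "0 < g z"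
  shows "0 < integral UNIV (\<lambda>\<eta>. E (y - \<eta>) * g \<eta>)"
proof -
  obtain d where d: "0 < d" and near: "\<And>\<eta>. dist \<eta> z < d \<Longrightarrow> dist (g \<eta>) (g z) < g z / 2"
    using cont pos unfolding continuous_on_eq_continuous_at[OF open_UNIV] continuous_at_eps_delta
    by (meson UNIV_I half_gt_zero)
  define r where "r = d / 2"
  define R where "R = \<bar>y - z\<bar> + r"
  define C where "C = exp (- (R + 1)) / (R + 1) / 2 * (g z / 2)"
  have r: "0 < r" "r < d"
    using d by (auto simp: r_def)
  have "0 < R + 1"
    using r by (simp add: R_def add_pos_nonneg)
  then have C: "0 < C"
    using pos by (simp add: C_def)
  \<comment> \<open>The minorant avoids \<open>\<eta> = y\<close>, where \<open>E 0\<close> is a junk value (the integral defining it diverges).\<close>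
  have minorant: "(if \<eta> \<noteq> y \<and> \<eta> \<in> {z-r..z+r} then C else 0) \<le> E (y - \<eta>) * g \<eta>" for \<eta>
  proof (cases "\<eta> \<noteq> y \<and> \<eta> \<in> {z-r..z+r}")
    case True
    then have "dist \<eta> z < d"
      using r by (auto simp: dist_real_def)
    then have "g z / 2 \<le> g \<eta>"
      using near[of \<eta>] unfolding dist_real_def by arith
    moreover have "exp (- (R + 1)) / (R + 1) / 2 \<le> E (y - \<eta>)"
      using True by (intro E_lower_bound) (auto simp: R_def)
    ultimately have "C \<le> E (y - \<eta>) * g \<eta>"
      unfolding C_def using pos E_nonneg by (intro mult_mono) auto
    then show ?thesis
      using True by simp
  next
    case False
    then show ?thesis
      using E_nonneg nonneg by (simp only: if_not_P if_False mult_nonneg_nonneg)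
  qed
  have "((\<lambda>_. C) has_integral (2 * r) * C) {z-r..z+r}"
    using has_integral_const_real[of C "z - r" "z + r"] r by simp
  then have "((\<lambda>\<eta>. if \<eta> \<in> {z-r..z+r} then C else 0) has_integral (2 * r) * C) UNIV"
    by (simp only: has_integral_restrict_UNIV)
  then have "((\<lambda>\<eta>. if \<eta> \<noteq> y \<and> \<eta> \<in> {z-r..z+r} then C else 0) has_integral (2 * r) * C) UNIV"
    by (rule has_integral_spike[OF negligible_sing[of y], rotated]) auto
  then have "(2 * r) * C \<le> integral UNIV (\<lambda>\<eta>. E (y - \<eta>) * g \<eta>)"
    by (rule has_integral_le[OF _ integrable_integral[OF E_conv_integrable[OF cont bdd]]])
      (rule minorant)
  moreover have "0 < (2 * r) * C"
    using r C by simp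
  ultimately show ?thesis
    by linarith
qed

lemma deriv2_nonpos_at_max:
  fixes f :: "real \<Rightarrow> real"
  assumes f': "\<And>y. (f has_real_derivative f' y) (at y)"
    and f'': "(f' has_real_derivative l) (at y0)"
    and max: "\<And>y. f y \<le> f y0"
  shows "l \<le> 0"
proof (rule ccontr)
  assume "\<not> l \<le> 0"
  have "f' y0 = 0"
    using max by (intro DERIV_local_max[OF f' zero_less_one]) auto
  obtain d where d: "0 < d" and inc: "\<And>h. 0 < h \<Longrightarrow> h < d \<Longrightarrow> f' y0 < f' (y0 + h)"
    using DERIV_pos_inc_right[OF f''] \<open>\<not> l \<le> 0\<close> by auto
  obtain z where z: "y0 < z" "z < y0 + d / 2" and mvt: "f (y0 + d / 2) - f y0 = (d / 2) * f' z"
    using MVT2[of y0 "y0 + d / 2" f f'] f' d by auto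
  have "0 < f' z"
    using inc[of "z - y0"] z \<open>f' y0 = 0\<close> by auto
  then have "0 < f (y0 + d / 2) - f y0"
    unfolding mvt using d by simp
  with max[of "y0 + d / 2"] show False
    by simp
qed

lemma E_equation_max_imp_const:
  fixes f f' f'' u :: "real \<Rightarrow> real"
  assumes f': "\<And>y. (f has_real_derivative f' y) (at y)"
    and f'': "\<And>y. (f' has_real_derivative f'' y) (at y)"
    and u_cont: "continuous_on UNIV u" and u_bdd: "bounded (range u)"
    and u_mono: "\<And>x y. f x \<le> f y \<longleftrightarrow> u x \<le> u y"
    and eqn: "\<And>y. f'' y - c * f' y - u y = - integral UNIV (\<lambda>\<eta>. E (y - \<eta>) * u \<eta>)"
    and max: "\<And>y. f y \<le> f y0"
  shows "f y = f y0"
proof (rule ccontr)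
  assume "f y \<noteq> f y0"
  then have "u y < u y0"
    using max[of y] u_mono[of y0 y] by auto
  then have "0 < integral UNIV (\<lambda>\<eta>. E (y0 - \<eta>) * (u y0 - u \<eta>))"
    using max u_mono u_cont u_bdd
    by (intro E_conv_pos[where z = y] bounded_minus_comp continuous_intros) auto
  moreover have "f' y0 = 0"
    using max by (intro DERIV_local_max[OF f' zero_less_one]) auto
  then have "f'' y0 = integral UNIV (\<lambda>\<eta>. E (y0 - \<eta>) * (u y0 - u \<eta>))"
    using eqn[of y0] E_conv_const_diff[OF E_conv_integrable[OF u_cont u_bdd]] by simp
  moreover have "f'' y0 \<le> 0"
    using deriv2_nonpos_at_max[OF f' f'' max] .
  ultimately show False
    by simp
qed

theorem lemma3p1:
  fixes c lam T_M :: real and f f' f'' :: "real \<Rightarrow> real"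
  assumes c_pos: "c > 0"
    and lam_pos: "0 < lam" and lam_le: "lam \<le> T_M"
    and d1: "\<And>y. (f has_real_derivative f' y) (at y)"
    and d2: "\<And>y. (f' has_real_derivative f'' y) (at y)"
    and cont2: "continuous_on UNIV f''"
    and eqn: "\<And>y. f'' y - c * f' y - f y ^ 4
                  = - integral UNIV (\<lambda>\<eta>. E (y - \<eta>) * f \<eta> ^ 4)"
    and bounds: "\<And>y. lam \<le> f y \<and> f y \<le> T_M"
  shows "(\<exists>k. \<forall>y. f y = k) \<or>
         ((\<nexists>y0. \<forall>y. f y \<le> f y0) \<and> (\<nexists>y0. \<forall>y. f y0 \<le> f y))"
proof -
  have pos: "0 < f y" for y
    using bounds[of y] lam_pos by linarith
  have f4_cont: "continuous_on UNIV (\<lambda>\<eta>. f \<eta> ^ 4)"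
    using d1 by (intro continuous_intros continuous_at_imp_continuous_on) (auto intro: DERIV_isCont)
  have "f \<eta> ^ 4 \<le> T_M ^ 4" for \<eta>
    using bounds pos less_imp_le by (intro power_mono) auto
  then have f4_bdd: "bounded (range (\<lambda>\<eta>. f \<eta> ^ 4))"
    unfolding bounded_iff by (intro exI[of _ "T_M ^ 4"]) auto
  have f4_mono: "f x \<le> f y \<longleftrightarrow> f x ^ 4 \<le> f y ^ 4" for x y
    using pos[of x] pos[of y] by simp
  have "f y = f y0" if "\<forall>y. f y \<le> f y0" for y y0
    using that by (intro E_equation_max_imp_const[OF d1 d2 f4_cont f4_bdd f4_mono eqn]) auto
  moreover have "f y = f y0" if "\<forall>y. f y0 \<le> f y" for y y0
  proof -
    have "- f y = - f y0"
    proof (rule E_equation_max_imp_const[where f = "\<lambda>x. - f x" and f' = "\<lambda>x. - f' x"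
          and f'' = "\<lambda>x. - f'' x" and u = "\<lambda>\<eta>. - (f \<eta> ^ 4)" and c = c])
      show "((\<lambda>x. - f x) has_real_derivative - f' y) (at y)"
        "((\<lambda>x. - f' x) has_real_derivative - f'' y) (at y)" for y
        using d1 d2 by (auto intro: derivative_intros)
      show "- f'' y - c * - f' y - - (f y ^ 4)
              = - integral UNIV (\<lambda>\<eta>. E (y - \<eta>) * - (f \<eta> ^ 4))" for y
        using eqn[of y] by simp
    qed (use that f4_cont f4_bdd f4_mono in \<open>auto intro: continuous_intros\<close>)
    then show ?thesis
      by simp
  qed
  ultimately show ?thesis
    by blast
qed

end
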